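(* Let $\mathcal{P}$ be a collection of cells. Let $a=(i,j)$, $b=(k,l)$ and $\alpha=(m,n)$ with $i<m<k$ and $n<j<l$, and suppose $[a,b]$ and $[\alpha,\beta]$ with $\beta=b$ are inner intervals of $\mathcal{P}$. Put $c=(i,l)$, $d=(k,j)$, $\gamma=(m,l)$, $\delta=(k,n)$, $h=(m,j)$, $r=(i,n)$. Let $<^{\mathsf{P}}$ be a $\mathsf{P}$-order on $V(\mathcal{P})$ and suppose that the leading monomials of $f_{a,b}$ and $f_{\alpha,\beta}$ with respect to $<^{\mathsf{P}}_{\mathrm{lex}}$ are not coprime. Then $S(f_{a,b},f_{\alpha,\beta})$ reduces to $0$ modulo $\mathcal{G}$ with respect to $<^{\mathsf{P}}_{\mathrm{lex}}$ if and only if one of the following holds: (1) $x_ax_\gamma x_\delta<^{\mathsf{P}}_{\mathrm{lex}}x_\alpha x_cx_d$, and ($h,\delta<^{\mathsf{P}}\alpha$ or $h,\delta<^{\mathsf{P}}d$); (2) $x_ax_\gamma x_\delta<^{\mathsf{P}}_{\mathrm{lex}}x_\alpha x_cx_d$, $[r,h]$ is an inner interval of $\mathcal{P}$, and ($r,\gamma<^{\mathsf{P}}\alpha$ or $r,\gamma<^{\mathsf{P}}c$); (3) $x_\alpha x_cx_d<^{\mathsf{P}}_{\mathrm{lex}}x_ax_\gamma x_\delta$, and ($h,c<^{\mathsf{P}}a$ or $h,c<^{\mathsf{P}}\gamma$); (4) $x_\alpha x_cx_d<^{\mathsf{P}}_{\mathrm{lex}}x_ax_\gamma x_\delta$, $[r,h]$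 is an inner interval of $\mathcal{P}$, and ($r,d<^{\mathsf{P}}a$ or $r,d<^{\mathsf{P}}\delta$).
   Context: For $a=(i,j), b=(k,l)\in\mathbb{Z}^2$ with $a\le b$ componentwise, the interval $[a,b]=\{(m,n)\in\mathbb{Z}^2: i\le m\le k,\ j\le n\le l\}$; it is proper if $i<k$ and $j<l$, in which case $a,b$ are its diagonal corners and $(i,l)$ (upper left), $(k,j)$ (lower right) its anti-diagonal corners. A cell is a proper interval $[v,v+(1,1)]$; its vertices are its four corners. A collection of cells $\mathcal{P}$ is a nonempty finite set of cells; $V(\mathcal{P})$ is the set of all vertices of its cells. A proper interval $[a,b]$ is an inner interval of $\mathcal{P}$ if every cell $[v,v+(1,1)]\subseteq[a,b]$ belongs to $\mathcal{P}$. Let $K$ be a field and $S=K[x_v: v\in V(\mathcal{P})]$. For an inner interval $[a,b]$ with upper left corner $c$ and lower right corner $d$, put $f_{a,b}=x_ax_b-x_cx_d$; $\mathcal{G}$ is the set of all such inner 2-minors of $\mathcal{P}$. A $\mathsf{P}$-order is a total order $<^{\mathsf{P}}$ on $V(\mathcal{P})$; $<^{\mathsf{P}}_{\mathrm{lex}}$ is the lexicographic monomial order on $S$ with $x_u<x_v\iff u<^{\mathsf{P}}v$. For vertices $u,v,w$, "$u,v<^{\mathsf{P}}w$" means $u<^{\mathsf{P}}w$ and $v<^{\mathsf{P}}w$. *)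

theory Defs
  imports Main "HOL-Library.Poly_Mapping"
begin

type_synonym vertex = "int \<times> int"
type_synonym monom = "vertex \<Rightarrow>\<^sub>0 nat"
type_synonym 'k mpoly = "monom \<Rightarrow>\<^sub>0 'k"

text \<open>A cell [v, v+(1,1)] is represented by its lower left corner v;
  a collection of cells is a finite nonempty set of such corners.\<close>
definition is_collection_of_cells :: "vertex set \<Rightarrow> bool" where
  "is_collection_of_cells P \<longleftrightarrow> finite P \<and> P \<noteq> {}"

definition cell_vertices :: "vertex \<Rightarrow> vertex set" where
  "cell_vertices v = {v, (fst v + 1, snd v), (fst v, snd v + 1), (fst v + 1, snd v + 1)}"

definition vertex_set :: "vertex set \<Rightarrow> vertex set" where
  "vertex_set P = (\<Union>v\<in>P. cell_vertices v)"

definition inner_interval :: "vertex set \<Rightarrow> vertex \<Rightarrow> vertex \<Rightarrow> bool" where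
  "inner_interval P a b \<longleftrightarrow> fst a < fst b \<and> snd a < snd b \<and>
     (\<forall>v. fst a \<le> fst v \<and> fst v < fst b \<and> snd a \<le> snd v \<and> snd v < snd b \<longrightarrow> v \<in> P)"

definition var :: "vertex \<Rightarrow> 'k::comm_ring_1 mpoly" where
  "var v = Poly_Mapping.single (Poly_Mapping.single v 1) 1"

definition minor :: "vertex \<Rightarrow> vertex \<Rightarrow> 'k::comm_ring_1 mpoly" where
  "minor a b = var a * var b - var (fst a, snd b) * var (fst b, snd a)"

definition inner_minors :: "vertex set \<Rightarrow> 'k::comm_ring_1 mpoly set" where
  "inner_minors P = {minor a b | a b. inner_interval P a b}"

definition P_order :: "vertex set \<Rightarrow> (vertex \<Rightarrow> vertex \<Rightarrow> bool) \<Rightarrow> bool" where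
  "P_order P lt \<longleftrightarrow>
     (\<forall>u\<in>vertex_set P. \<not> lt u u) \<and>
     (\<forall>u\<in>vertex_set P. \<forall>v\<in>vertex_set P. \<forall>w\<in>vertex_set P. lt u v \<longrightarrow> lt v w \<longrightarrow> lt u w) \<and>
     (\<forall>u\<in>vertex_set P. \<forall>v\<in>vertex_set P. u \<noteq> v \<longrightarrow> lt u v \<or> lt v u)"

definition lex_less :: "(vertex \<Rightarrow> vertex \<Rightarrow> bool) \<Rightarrow> monom \<Rightarrow> monom \<Rightarrow> bool" where
  "lex_less lt m1 m2 \<longleftrightarrow>
     (\<exists>v. Poly_Mapping.lookup m1 v < Poly_Mapping.lookup m2 v \<and> (\<forall>w. lt v w \<longrightarrow> Poly_Mapping.lookup m1 w = Poly_Mapping.lookup m2 w))"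

definition lex_le :: "(vertex \<Rightarrow> vertex \<Rightarrow> bool) \<Rightarrow> monom \<Rightarrow> monom \<Rightarrow> bool" where
  "lex_le lt m1 m2 \<longleftrightarrow> m1 = m2 \<or> lex_less lt m1 m2"

definition lead_mon :: "(vertex \<Rightarrow> vertex \<Rightarrow> bool) \<Rightarrow> 'k::zero mpoly \<Rightarrow> monom" where
  "lead_mon lt f = (THE m. m \<in> Poly_Mapping.keys f \<and> (\<forall>m'\<in>Poly_Mapping.keys f. m' \<noteq> m \<longrightarrow> lex_less lt m' m))"

definition lead_coef :: "(vertex \<Rightarrow> vertex \<Rightarrow> bool) \<Rightarrow> 'k::zero mpoly \<Rightarrow> 'k" where
  "lead_coef lt f = Poly_Mapping.lookup f (lead_mon lt f)"

definition mon_lcm :: "monom \<Rightarrow> monom \<Rightarrow> monom" where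
  "mon_lcm u v = u + (v - u)"

definition spoly :: "(vertex \<Rightarrow> vertex \<Rightarrow> bool) \<Rightarrow> 'k::field mpoly \<Rightarrow> 'k mpoly \<Rightarrow> 'k mpoly" where
  "spoly lt f g =
     (let u = lead_mon lt f; v = lead_mon lt g; w = mon_lcm u v in
       Poly_Mapping.single (w - u) (inverse (lead_coef lt f)) * f
       - Poly_Mapping.single (w - v) (inverse (lead_coef lt g)) * g)"

text \<open>f reduces to 0 modulo G (Herzog--Hibi): f has a standard expression
  f = sum q_i g_i with g_i in G, q_i in S = K[x_v : v in V], and
  in(q_i g_i) <= in(f) whenever q_i g_i is nonzero.\<close>
definition reduces_to_zero ::
  "(vertex \<Rightarrow> vertex \<Rightarrow> bool) \<Rightarrow> vertex set \<Rightarrow> 'k::field mpoly set \<Rightarrow> 'k mpoly \<Rightarrow> bool" where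
  "reduces_to_zero lt V G f \<longleftrightarrow>
     (\<exists>gs qs. length qs = length gs \<and> set gs \<subseteq> G \<and>
        (\<forall>q\<in>set qs. \<forall>m\<in>Poly_Mapping.keys q. Poly_Mapping.keys m \<subseteq> V) \<and>
        f = sum_list (map2 (*) qs gs) \<and>
        (\<forall>i<length gs. qs ! i * gs ! i \<noteq> 0 \<longrightarrow>
            lex_le lt (lead_mon lt (qs ! i * gs ! i)) (lead_mon lt f)))"

definition mon3 :: "vertex \<Rightarrow> vertex \<Rightarrow> vertex \<Rightarrow> monom" where
  "mon3 u v w = Poly_Mapping.single u 1 + Poly_Mapping.single v 1 + Poly_Mapping.single w 1"

end

theory Submission
  imports Defs
begin

text \<open>Both leading monomials contain \<open>x\<^sub>b\<close>, so the S-polynomial is the binomial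
  \<open>x\<^sub>a x\<^sub>\<gamma> x\<^sub>\<delta> - x\<^sub>\<alpha> x\<^sub>c x\<^sub>d\<close>. If a binomial reduces to zero modulo the inner
  2-minors, its leading monomial is divisible by the leading monomial of some inner 2-minor;
  the only rectangles with two corners among the three variables of the leading term are
  \<open>[a,\<gamma>]\<close> and \<open>[r,d]\<close> (if \<open>x\<^sub>a x\<^sub>\<gamma> x\<^sub>\<delta>\<close> leads), resp. \<open>[\<alpha>,d]\<close> and \<open>[r,\<gamma>]\<close>
  (if \<open>x\<^sub>\<alpha> x\<^sub>c x\<^sub>d\<close> leads), the rectangle \<open>[\<alpha>,b]\<close> resp. \<open>[a,b]\<close> being excluded by
  the choice of leading monomials. Conversely the S-polynomial is the sum of the two
  binomials \<open>x\<^sub>\<delta> f\<^sub>a\<^sub>,\<^sub>\<gamma>\<close> and \<open>-x\<^sub>c f\<^sub>\<alpha>\<^sub>,\<^sub>d\<close> through the middle monomial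
  \<open>x\<^sub>\<delta> x\<^sub>c x\<^sub>h\<close>, and, when \<open>[r,h]\<close> is inner, of \<open>-x\<^sub>\<gamma> f\<^sub>r\<^sub>,\<^sub>d\<close> and
  \<open>x\<^sub>d f\<^sub>r\<^sub>,\<^sub>\<gamma>\<close> through \<open>x\<^sub>d x\<^sub>r x\<^sub>\<gamma>\<close>; such a sum is a standard expression exactly when
  the middle monomial lies below the leading one.\<close>

abbreviation X :: "vertex \<Rightarrow> monom" where
  "X v \<equiv> Poly_Mapping.single v 1"

abbreviation Mon :: "monom \<Rightarrow> 'k::comm_ring_1 mpoly" where
  "Mon t \<equiv> Poly_Mapping.single t 1"

section \<open>Monomials and binomials\<close>

lemma lex_less_irrefl: "\<not> lex_less lt m m"
  unfolding lex_less_def by auto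

lemma lex_less_add_right: "lex_less lt (m1 + t) (m2 + t) \<longleftrightarrow> lex_less lt m1 m2"
  unfolding lex_less_def by (simp add: lookup_add)

lemma lex_less_add_left: "lex_less lt (t + m1) (t + m2) \<longleftrightarrow> lex_less lt m1 m2"
  unfolding lex_less_def by (simp add: lookup_add)

lemma lead_mon_uminus: "lead_mon lt (- f) = lead_mon lt (f :: 'k::ab_group_add mpoly)"
proof -
  have "Poly_Mapping.keys (- f) = Poly_Mapping.keys f"
    by (auto simp: in_keys_iff)
  then show ?thesis
    unfolding lead_mon_def by simp
qed

lemma keys_X2_subset: "Poly_Mapping.keys (X u + X v) \<subseteq> {u, v}"
  using keys_add[of "X u" "X v"] by auto

lemma keys_X2: "u \<noteq> v \<Longrightarrow> Poly_Mapping.keys (X u + X v) = {u, v}"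
  by (auto simp: in_keys_iff lookup_add lookup_single when_def split: if_splits)

lemma X2_neq:
  assumes "u \<noteq> u'" "u \<noteq> v'"
  shows "X u + X v \<noteq> X u' + X v'"
proof
  assume "X u + X v = X u' + X v'"
  then have "Poly_Mapping.lookup (X u + X v) u = Poly_Mapping.lookup (X u' + X v') u"
    by simp
  then show False
    using assms by (simp add: lookup_add lookup_single when_def)
qed

lemma keys_mon3_subset: "Poly_Mapping.keys (mon3 u v w) \<subseteq> {u, v, w}"
  unfolding mon3_def using keys_add[of "X u + X v" "X w"] keys_X2_subset[of u v] by auto

lemma mon3_eq_add_X2_mem:
  assumes "mon3 u v w = t + (X p + X q)"
  shows "p \<in> {u, v, w}" "q \<in> {u, v, w}"
proof -
  have "Poly_Mapping.lookup (mon3 u v w) p \<noteq> 0" "Poly_Mapping.lookup (mon3 u v w) q \<noteq> 0"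
    unfolding assms by (simp_all add: lookup_add)
  then show "p \<in> {u, v, w}" "q \<in> {u, v, w}"
    unfolding mon3_def by (auto simp: lookup_add lookup_single when_def split: if_splits)
qed

lemma mon3_neq: "u \<noteq> u' \<Longrightarrow> u \<noteq> v' \<Longrightarrow> u \<noteq> w' \<Longrightarrow> mon3 u v w \<noteq> mon3 u' v' w'"
proof
  assume "u \<noteq> u'" "u \<noteq> v'" "u \<noteq> w'" "mon3 u v w = mon3 u' v' w'"
  then have "Poly_Mapping.lookup (mon3 u v w) u = Poly_Mapping.lookup (mon3 u' v' w') u"
    by simp
  then show False
    using \<open>u \<noteq> u'\<close> \<open>u \<noteq> v'\<close> \<open>u \<noteq> w'\<close> by (simp add: mon3_def lookup_add lookup_single when_def)
qed

lemma keys_binomial: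
  "e1 \<noteq> e2 \<Longrightarrow> Poly_Mapping.keys (Mon e1 - Mon e2 :: 'k::comm_ring_1 mpoly) = {e1, e2}"
  by (auto simp: in_keys_iff lookup_minus lookup_single when_def split: if_splits)

lemma keys_binomial_subset:
  "Poly_Mapping.keys (Mon e1 - Mon e2 :: 'k::comm_ring_1 mpoly) \<subseteq> {e1, e2}"
  by (auto simp: in_keys_iff lookup_minus lookup_single when_def split: if_splits)

lemma keys_mult_supported:
  fixes p q :: "'k::comm_ring_1 mpoly"
  assumes "\<forall>t\<in>Poly_Mapping.keys p. Poly_Mapping.keys t \<subseteq> V"
    and "\<forall>t\<in>Poly_Mapping.keys q. Poly_Mapping.keys t \<subseteq> V"
  shows "\<forall>t\<in>Poly_Mapping.keys (p * q). Poly_Mapping.keys t \<subseteq> V"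
proof
  fix t
  assume "t \<in> Poly_Mapping.keys (p * q)"
  then obtain a b where "a \<in> Poly_Mapping.keys p" "b \<in> Poly_Mapping.keys q" "t = a + b"
    using keys_mult by blast
  then show "Poly_Mapping.keys t \<subseteq> V"
    using assms keys_add[of a b] by blast
qed

lemma lookup_mult_single_add:
  fixes q :: "'k::comm_ring_1 mpoly"
  shows "Poly_Mapping.lookup (q * Poly_Mapping.single e c) (t + e) = Poly_Mapping.lookup q t * c"
proof -
  have "Poly_Mapping.lookup (q * Poly_Mapping.single e c) (t + e)
      = (\<Sum>s. Poly_Mapping.lookup q s * (c when t = s))"
    unfolding lookup_mult lookup_single
  proof (rule Sum_any.cong)
    fix s
    have "(\<Sum>r. (c when e = r) when t + e = s + r) = (\<Sum>r. (c when t + e = s + r) when e = r)"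
      by (simp add: when_commute)
    also have "\<dots> = (c when t = s)"
      by (simp add: when_def)
    finally show "Poly_Mapping.lookup q s * (\<Sum>r. (c when e = r) when t + e = s + r)
        = Poly_Mapping.lookup q s * (c when t = s)" by simp
  qed
  also have "\<dots> = (\<Sum>s. Poly_Mapping.lookup q s * c when s = t)"
    by (rule Sum_any.cong) (auto simp: when_def)
  finally show ?thesis by simp
qed

lemma keys_mult_single:
  fixes q :: "'k::comm_ring_1 mpoly"
  shows "Poly_Mapping.keys (q * Poly_Mapping.single e c) \<subseteq> (\<lambda>t. t + e) ` Poly_Mapping.keys q"
  using keys_mult[of q "Poly_Mapping.single e c"] by (auto split: if_splits)

lemma lookup_sum_list_nonzero:
  "Poly_Mapping.lookup (sum_list ps) t \<noteq> 0 \<Longrightarrow> \<exists>p\<in>set ps. Poly_Mapping.lookup p t \<noteq> (0::'k::comm_monoid_add)"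
  by (induction ps) (auto simp: lookup_add)

section \<open>Lexicographic order induced by a total order on the vertices\<close>

locale vertex_order =
  fixes V :: "vertex set" and lt :: "vertex \<Rightarrow> vertex \<Rightarrow> bool"
  assumes irrefl: "u \<in> V \<Longrightarrow> \<not> lt u u"
    and trans: "u \<in> V \<Longrightarrow> v \<in> V \<Longrightarrow> w \<in> V \<Longrightarrow> lt u v \<Longrightarrow> lt v w \<Longrightarrow> lt u w"
    and total: "u \<in> V \<Longrightarrow> v \<in> V \<Longrightarrow> u \<noteq> v \<Longrightarrow> lt u v \<or> lt v u"
begin

lemma asymp_on_lt: "asymp_on V lt"
  by (rule asymp_onI) (use irrefl trans in blast)

lemma transp_on_lt: "transp_on V lt"
  by (rule transp_onI) (rule trans)

lemma lex_less_witness: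
  assumes "lex_less lt m1 m2" and "Poly_Mapping.keys m2 \<subseteq> V"
  obtains v where "v \<in> V" "Poly_Mapping.lookup m1 v < Poly_Mapping.lookup m2 v"
    "\<And>w. lt v w \<Longrightarrow> Poly_Mapping.lookup m1 w = Poly_Mapping.lookup m2 w"
proof -
  obtain v where v: "Poly_Mapping.lookup m1 v < Poly_Mapping.lookup m2 v"
    "\<And>w. lt v w \<Longrightarrow> Poly_Mapping.lookup m1 w = Poly_Mapping.lookup m2 w"
    using assms(1) unfolding lex_less_def by blast
  then have "v \<in> Poly_Mapping.keys m2"
    by (simp add: in_keys_iff)
  with v assms(2) that show ?thesis by blast
qed

lemma lex_less_trans:
  assumes V: "Poly_Mapping.keys m1 \<subseteq> V" "Poly_Mapping.keys m2 \<subseteq> V" "Poly_Mapping.keys m3 \<subseteq> V"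
    and "lex_less lt m1 m2" "lex_less lt m2 m3"
  shows "lex_less lt m1 m3"
proof -
  obtain v1 where v1: "v1 \<in> V" "Poly_Mapping.lookup m1 v1 < Poly_Mapping.lookup m2 v1"
    "\<And>w. lt v1 w \<Longrightarrow> Poly_Mapping.lookup m1 w = Poly_Mapping.lookup m2 w"
    using lex_less_witness assms(2,4) by blast
  obtain v2 where v2: "v2 \<in> V" "Poly_Mapping.lookup m2 v2 < Poly_Mapping.lookup m3 v2"
    "\<And>w. lt v2 w \<Longrightarrow> Poly_Mapping.lookup m2 w = Poly_Mapping.lookup m3 w"
    using lex_less_witness assms(3,5) by blast
  have outside: "Poly_Mapping.lookup m1 w = Poly_Mapping.lookup m3 w" if "w \<notin> V" for w
  proof -
    have "w \<notin> Poly_Mapping.keys m1" "w \<notin> Poly_Mapping.keys m3"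
      using that V by auto
    then show ?thesis
      by (simp add: in_keys_iff)
  qed
  define v where "v = (if lt v1 v2 then v2 else v1)"
  have v2_v1: "\<not> lt v1 v2 \<Longrightarrow> v2 = v1 \<or> lt v2 v1"
    using total[OF v1(1) v2(1)] by blast
  have above: "lt v1 w \<and> lt v2 w" if "lt v w" "w \<in> V" for w
  proof (cases "lt v1 v2")
    case True
    then show ?thesis
      using that trans[OF v1(1) v2(1) \<open>w \<in> V\<close>] unfolding v_def by simp
  next
    case False
    then show ?thesis
      using that v2_v1 trans[OF v2(1) v1(1) \<open>w \<in> V\<close>] unfolding v_def by auto
  qed
  show ?thesis
    unfolding lex_less_def
  proof (intro exI[of _ v] conjI allI impI)
    show "Poly_Mapping.lookup m1 v < Poly_Mapping.lookup m3 v"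
    proof (cases "lt v1 v2")
      case True
      then show ?thesis
        using v1(3)[OF True] v2(2) unfolding v_def by simp
    next
      case False
      then show ?thesis
        using v2_v1 v1(2) v2(2) v2(3)[of v1] unfolding v_def by auto
    qed
    show "Poly_Mapping.lookup m1 w = Poly_Mapping.lookup m3 w" if "lt v w" for w
      using that above v1(3) v2(3) outside by (cases "w \<in> V") auto
  qed
qed

lemma lex_less_asym:
  "Poly_Mapping.keys m1 \<subseteq> V \<Longrightarrow> Poly_Mapping.keys m2 \<subseteq> V \<Longrightarrow> lex_less lt m1 m2 \<Longrightarrow> \<not> lex_less lt m2 m1"
  using lex_less_trans[of m1 m2 m1] lex_less_irrefl by blast

lemma lex_less_total:
  assumes V: "Poly_Mapping.keys m1 \<subseteq> V" "Poly_Mapping.keys m2 \<subseteq> V" and "m1 \<noteq> m2"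
  shows "lex_less lt m1 m2 \<or> lex_less lt m2 m1"
proof -
  define D where "D = {v. Poly_Mapping.lookup m1 v \<noteq> Poly_Mapping.lookup m2 v}"
  have D_keys: "D \<subseteq> Poly_Mapping.keys m1 \<union> Poly_Mapping.keys m2"
    unfolding D_def by (auto simp: in_keys_iff)
  have "finite D"
    using D_keys by (rule finite_subset) simp
  have "D \<subseteq> V"
    using D_keys V by blast
  have "D \<noteq> {}"
  proof
    assume "D = {}"
    then have "m1 = m2"
      unfolding D_def by (intro poly_mapping_eqI) auto
    with \<open>m1 \<noteq> m2\<close> show False ..
  qed
  then obtain v where "v \<in> D" and max: "\<And>w. w \<in> D \<Longrightarrow> w \<noteq> v \<Longrightarrow> \<not> lt v w"
    using Finite_Set.bex_max_element[of D lt] \<open>finite D\<close> \<open>D \<subseteq> V\<close> asymp_on_subset[OF asymp_on_lt]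
      transp_on_subset[OF transp_on_lt] by blast
  have agree: "Poly_Mapping.lookup m1 w = Poly_Mapping.lookup m2 w" if "lt v w" for w
    using that max irrefl \<open>v \<in> D\<close> \<open>D \<subseteq> V\<close> unfolding D_def by blast
  from \<open>v \<in> D\<close> consider "Poly_Mapping.lookup m1 v < Poly_Mapping.lookup m2 v"
    | "Poly_Mapping.lookup m2 v < Poly_Mapping.lookup m1 v"
    unfolding D_def by fastforce
  then show ?thesis
    unfolding lex_less_def using agree by cases (metis, metis)
qed

lemma finite_ex_lex_greatest:
  assumes "finite K" "K \<noteq> {}" "\<forall>m\<in>K. Poly_Mapping.keys m \<subseteq> V"
  obtains m where "m \<in> K" "\<And>m'. m' \<in> K \<Longrightarrow> m' \<noteq> m \<Longrightarrow> lex_less lt m' m"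
proof -
  have "asymp_on K (lex_less lt)"
    using assms(3) lex_less_asym by (blast intro: asymp_onI)
  moreover have "transp_on K (lex_less lt)"
    using assms(3) lex_less_trans by (blast intro: transp_onI)
  ultimately obtain m where "m \<in> K" "\<forall>m'\<in>K. m' \<noteq> m \<longrightarrow> \<not> lex_less lt m m'"
    using Finite_Set.bex_max_element assms(1,2) by blast
  then show ?thesis
    using that lex_less_total assms(3) by blast
qed

lemma lead_mon_eqI:
  assumes "\<forall>t\<in>Poly_Mapping.keys f. Poly_Mapping.keys t \<subseteq> V" and "m \<in> Poly_Mapping.keys f"
    and "\<And>m'. m' \<in> Poly_Mapping.keys f \<Longrightarrow> m' \<noteq> m \<Longrightarrow> lex_less lt m' m"
  shows "lead_mon lt f = m"
  unfolding lead_mon_def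
proof (rule the_equality)
  show "m \<in> Poly_Mapping.keys f \<and> (\<forall>m'\<in>Poly_Mapping.keys f. m' \<noteq> m \<longrightarrow> lex_less lt m' m)"
    using assms(2,3) by blast
  fix m2
  assume m2: "m2 \<in> Poly_Mapping.keys f \<and> (\<forall>m'\<in>Poly_Mapping.keys f. m' \<noteq> m2 \<longrightarrow> lex_less lt m' m2)"
  show "m2 = m"
  proof (rule ccontr)
    assume "m2 \<noteq> m"
    then have "lex_less lt m2 m" "lex_less lt m m2"
      using assms(3) m2 assms(2) by auto
    then show False
      using lex_less_asym assms(1,2) m2 by blast
  qed
qed

lemma lead_mon_greatest:
  assumes "f \<noteq> 0" and "\<forall>t\<in>Poly_Mapping.keys f. Poly_Mapping.keys t \<subseteq> V"
  shows "lead_mon lt f \<in> Poly_Mapping.keys f"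
    and "\<And>m. m \<in> Poly_Mapping.keys f \<Longrightarrow> lex_le lt m (lead_mon lt f)"
proof -
  obtain m where "m \<in> Poly_Mapping.keys f"
    and "\<And>m'. m' \<in> Poly_Mapping.keys f \<Longrightarrow> m' \<noteq> m \<Longrightarrow> lex_less lt m' m"
    using finite_ex_lex_greatest[of "Poly_Mapping.keys f"] assms by auto
  moreover have "lead_mon lt f = m"
    using lead_mon_eqI calculation assms(2) by blast
  ultimately show "lead_mon lt f \<in> Poly_Mapping.keys f"
    and "\<And>m'. m' \<in> Poly_Mapping.keys f \<Longrightarrow> lex_le lt m' (lead_mon lt f)"
    unfolding lex_le_def by auto
qed

lemma lex_less_X2_iff:
  assumes V: "p \<in> V" "q \<in> V" "s \<in> V" "t \<in> V"
    and distinct: "p \<noteq> q" "p \<noteq> s" "p \<noteq> t" "q \<noteq> s" "q \<noteq> t" "s \<noteq> t"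
  shows "lex_less lt (X s + X t) (X p + X q) \<longleftrightarrow> (lt s p \<and> lt t p) \<or> (lt s q \<and> lt t q)"
proof
  assume "lex_less lt (X s + X t) (X p + X q)"
  then obtain v where v: "Poly_Mapping.lookup (X s + X t) v < Poly_Mapping.lookup (X p + X q) v"
    "\<And>w. lt v w \<Longrightarrow> Poly_Mapping.lookup (X s + X t) w = Poly_Mapping.lookup (X p + X q) w"
    unfolding lex_less_def by blast
  have "v = p \<or> v = q"
    using v(1) by (auto simp: lookup_add lookup_single when_def split: if_splits)
  moreover have "\<not> lt v s" "\<not> lt v t"
    using v(2)[of s] v(2)[of t] distinct by (auto simp: lookup_add lookup_single when_def)
  moreover from calculation have "v \<in> V" "v \<noteq> s" "v \<noteq> t"
    using V distinct by auto
  ultimately show "(lt s p \<and> lt t p) \<or> (lt s q \<and> lt t q)"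
    using total V(3,4) by blast
next
  assume below: "(lt s p \<and> lt t p) \<or> (lt s q \<and> lt t q)"
  obtain v where v: "v = p \<or> v = q" "lt s v" "lt t v" "\<not> lt v p" "\<not> lt v q"
  proof (cases "lt p q")
    case True
    then have "lt s q \<and> lt t q"
      using below trans V by blast
    moreover have "\<not> lt q p"
      using True trans[of p q p] irrefl V by blast
    ultimately show ?thesis
      using that[of q] irrefl V by blast
  next
    case False
    then have "lt s p \<and> lt t p"
      using below total[OF V(1,2) distinct(1)] trans V by blast
    then show ?thesis
      using that[of p] False irrefl V by blast
  qed
  have "v \<in> V"
    using v(1) V by blast
  show "lex_less lt (X s + X t) (X p + X q)"
    unfolding lex_less_def
  proof (intro exI[of _ v] conjI allI impI)
    show "Poly_Mapping.lookup (X s + X t) v < Poly_Mapping.lookup (X p + X q) v"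
      using v(1) distinct by (auto simp: lookup_add lookup_single when_def)
    fix w
    assume "lt v w"
    then have "w \<noteq> p" "w \<noteq> q" "w \<noteq> s" "w \<noteq> t"
      using v \<open>v \<in> V\<close> V trans irrefl by blast+
    then show "Poly_Mapping.lookup (X s + X t) w = Poly_Mapping.lookup (X p + X q) w"
      by (auto simp: lookup_add lookup_single when_def)
  qed
qed

lemma lex_less_mon3_iff:
  assumes "p \<in> V" "q \<in> V" "s \<in> V" "t \<in> V"
    and "p \<noteq> q" "p \<noteq> s" "p \<noteq> t" "q \<noteq> s" "q \<noteq> t" "s \<noteq> t"
  shows "lex_less lt (mon3 u s t) (mon3 u p q) \<longleftrightarrow> (lt s p \<and> lt t p) \<or> (lt s q \<and> lt t q)"
  unfolding mon3_def add.assoc lex_less_add_left using lex_less_X2_iff[OF assms] .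

lemma lead_mon_binomial:
  assumes "Poly_Mapping.keys e1 \<subseteq> V" "Poly_Mapping.keys e2 \<subseteq> V" "lex_less lt e2 e1"
  shows "lead_mon lt (Mon e1 - Mon e2 :: 'k::comm_ring_1 mpoly) = e1"
proof -
  have "e1 \<noteq> e2"
    using assms(3) lex_less_irrefl by blast
  then show ?thesis
    using assms by (intro lead_mon_eqI) (auto simp: keys_binomial)
qed

lemma lead_mon_mult_binomial:
  fixes q :: "'k::comm_ring_1 mpoly"
  assumes q: "q \<noteq> 0" "\<forall>t\<in>Poly_Mapping.keys q. Poly_Mapping.keys t \<subseteq> V"
    and e: "Poly_Mapping.keys e1 \<subseteq> V" "Poly_Mapping.keys e2 \<subseteq> V" "lex_less lt e2 e1"
  shows "lead_mon lt (q * (Mon e1 - Mon e2)) = lead_mon lt q + e1"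
proof -
  let ?t0 = "lead_mon lt q"
  have t0: "?t0 \<in> Poly_Mapping.keys q" and below: "\<And>t. t \<in> Poly_Mapping.keys q \<Longrightarrow> lex_le lt t ?t0"
    using lead_mon_greatest[OF q] by blast+
  have supp: "Poly_Mapping.keys (t + e) \<subseteq> V"
    if "t \<in> Poly_Mapping.keys q" "Poly_Mapping.keys e \<subseteq> V" for t e
    using that q(2) keys_add[of t e] by blast
  have lower: "lex_less lt (t + e2) (?t0 + e1)" if "t \<in> Poly_Mapping.keys q" for t
  proof -
    have "lex_le lt (t + e2) (?t0 + e2)"
      using below[OF that] unfolding lex_le_def lex_less_add_right by auto
    moreover have "lex_less lt (?t0 + e2) (?t0 + e1)"
      using e(3) by (simp add: lex_less_add_left)
    ultimately show ?thesis
      using lex_less_trans supp that t0 e unfolding lex_le_def by metis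
  qed
  have keys_prod: "Poly_Mapping.keys (q * (Mon e1 - Mon e2))
      \<subseteq> (\<lambda>t. t + e1) ` Poly_Mapping.keys q \<union> (\<lambda>t. t + e2) ` Poly_Mapping.keys q"
    using keys_mult_single[of q e1 1] keys_mult_single[of q e2 1]
      keys_add[of "q * Mon e1" "- (q * Mon e2)"]
    by (auto simp: right_diff_distrib in_keys_iff lookup_minus)
  have "Poly_Mapping.lookup (q * Mon e2) (?t0 + e1) = 0"
  proof (rule ccontr)
    assume "Poly_Mapping.lookup (q * Mon e2) (?t0 + e1) \<noteq> 0"
    then obtain t where "t \<in> Poly_Mapping.keys q" "?t0 + e1 = t + e2"
      using keys_mult_single[of q e2 1] by (auto simp: in_keys_iff)
    then show False
      using lower lex_less_irrefl by metis
  qed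
  then have "Poly_Mapping.lookup (q * (Mon e1 - Mon e2)) (?t0 + e1) = Poly_Mapping.lookup q ?t0"
    by (simp add: right_diff_distrib lookup_minus lookup_mult_single_add)
  then have "?t0 + e1 \<in> Poly_Mapping.keys (q * (Mon e1 - Mon e2))"
    using t0 by (simp add: in_keys_iff)
  moreover have "lex_less lt m (?t0 + e1)"
    if "m \<in> Poly_Mapping.keys (q * (Mon e1 - Mon e2))" "m \<noteq> ?t0 + e1" for m
  proof -
    from that keys_prod consider t where "t \<in> Poly_Mapping.keys q" "m = t + e1" "t \<noteq> ?t0"
      | t where "t \<in> Poly_Mapping.keys q" "m = t + e2"
      by blast
    then show ?thesis
      using below lower unfolding lex_le_def by cases (auto simp: lex_less_add_right)
  qed
  ultimately show ?thesis
    using keys_prod supp e by (intro lead_mon_eqI) blast+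
qed

text \<open>Some summand \<open>q g\<close> of a standard expression contains the monomial \<open>in(S)\<close>; as
  \<open>in(q g) \<le> in(S)\<close>, it is the leading monomial of \<open>q g\<close>, which for a binomial \<open>g\<close> is
  \<open>in(q) in(g)\<close>.\<close>
lemma reduces_to_zero_lead_mon_dvd:
  fixes S :: "'k::field mpoly"
  assumes red: "reduces_to_zero lt V G S"
    and S: "S \<noteq> 0" "\<forall>t\<in>Poly_Mapping.keys S. Poly_Mapping.keys t \<subseteq> V"
    and binomials: "\<And>g. g \<in> G \<Longrightarrow> \<exists>e1 e2. Poly_Mapping.keys e1 \<subseteq> V \<and> Poly_Mapping.keys e2 \<subseteq> V
        \<and> lex_less lt e2 e1 \<and> (g = Mon e1 - Mon e2 \<or> g = Mon e2 - Mon e1)"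
  shows "\<exists>g\<in>G. \<exists>t. lead_mon lt S = t + lead_mon lt g"
proof -
  let ?M = "lead_mon lt S"
  obtain gs qs where gq: "length qs = length gs" "set gs \<subseteq> G"
    "\<forall>q\<in>set qs. \<forall>t\<in>Poly_Mapping.keys q. Poly_Mapping.keys t \<subseteq> V"
    "S = sum_list (map2 (*) qs gs)"
    "\<And>i. i < length gs \<Longrightarrow> qs ! i * gs ! i \<noteq> 0 \<Longrightarrow> lex_le lt (lead_mon lt (qs ! i * gs ! i)) ?M"
    using red unfolding reduces_to_zero_def by blast
  have "Poly_Mapping.lookup S ?M \<noteq> 0"
    using lead_mon_greatest(1)[OF S] by (simp add: in_keys_iff)
  then obtain q g where "(q, g) \<in> set (zip qs gs)" and qgM: "Poly_Mapping.lookup (q * g) ?M \<noteq> 0"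
    using lookup_sum_list_nonzero gq(4) by fastforce
  then obtain i where i: "i < length gs" "q = qs ! i" "g = gs ! i"
    using gq(1) by (auto simp: in_set_zip)
  have "g \<in> G" "\<forall>t\<in>Poly_Mapping.keys q. Poly_Mapping.keys t \<subseteq> V"
    using i gq(1-3) nth_mem by (metis subsetD, metis)
  obtain e1 e2 where e: "Poly_Mapping.keys e1 \<subseteq> V" "Poly_Mapping.keys e2 \<subseteq> V" "lex_less lt e2 e1"
    and g: "g = Mon e1 - Mon e2 \<or> g = Mon e2 - Mon e1"
    using binomials[OF \<open>g \<in> G\<close>] by blast
  define q' where "q' = (if g = Mon e1 - Mon e2 then q else - q)"
  have qg: "q * g = q' * (Mon e1 - Mon e2)"
    using g unfolding q'_def by (cases "g = Mon e1 - Mon e2") (simp_all add: right_diff_distrib)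
  have supp_q': "\<forall>t\<in>Poly_Mapping.keys q'. Poly_Mapping.keys t \<subseteq> V"
    using \<open>\<forall>t\<in>Poly_Mapping.keys q. _\<close> unfolding q'_def by (auto simp: in_keys_iff)
  have M_key: "?M \<in> Poly_Mapping.keys (q' * (Mon e1 - Mon e2))"
    using qgM qg by (simp add: in_keys_iff)
  have prod_ne: "q' * (Mon e1 - Mon e2) \<noteq> 0"
    using M_key by auto
  then have "q' \<noteq> 0"
    by auto
  have supp_prod: "\<forall>t\<in>Poly_Mapping.keys (q' * (Mon e1 - Mon e2)). Poly_Mapping.keys t \<subseteq> V"
    using supp_q' keys_binomial_subset[of e1 e2] e(1,2) by (intro keys_mult_supported) auto
  have "lex_le lt (lead_mon lt (q' * (Mon e1 - Mon e2))) ?M"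
    using gq(5)[OF i(1)] i qg prod_ne by simp
  moreover have "lex_le lt ?M (lead_mon lt (q' * (Mon e1 - Mon e2)))"
    using lead_mon_greatest(2)[OF prod_ne supp_prod M_key] .
  ultimately have "?M = lead_mon lt (q' * (Mon e1 - Mon e2))"
    using lex_less_asym[of ?M] supp_prod M_key lead_mon_greatest(1)[OF prod_ne supp_prod]
    unfolding lex_le_def by metis
  also have "\<dots> = lead_mon lt q' + e1"
    by (rule lead_mon_mult_binomial[OF \<open>q' \<noteq> 0\<close> supp_q' e])
  finally have "?M = lead_mon lt q' + e1" .
  moreover have "lead_mon lt g = e1"
    using g lead_mon_binomial[OF e, where 'k = 'k] lead_mon_uminus[of lt "Mon e1 - Mon e2 :: 'k mpoly"]
    by auto
  ultimately show ?thesis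
    using \<open>g \<in> G\<close> by blast
qed

lemma binomial_reduces_to_zero_via:
  fixes q1 q2 g1 g2 :: "'k::field mpoly"
  assumes "g1 \<in> G" "g2 \<in> G"
    and "\<forall>t\<in>Poly_Mapping.keys q1. Poly_Mapping.keys t \<subseteq> V"
    and "\<forall>t\<in>Poly_Mapping.keys q2. Poly_Mapping.keys t \<subseteq> V"
    and q1g1: "q1 * g1 = Mon A - Mon D" and q2g2: "q2 * g2 = Mon D - Mon B"
    and V: "Poly_Mapping.keys A \<subseteq> V" "Poly_Mapping.keys B \<subseteq> V" "Poly_Mapping.keys D \<subseteq> V"
    and below: "(lex_less lt B A \<and> lex_less lt D A) \<or> (lex_less lt A B \<and> lex_less lt D B)"
  shows "reduces_to_zero lt V G (Mon A - Mon B)"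
proof -
  have lead: "lead_mon lt (Mon A - Mon B :: 'k mpoly) = (if lex_less lt B A then A else B)"
  proof (cases "lex_less lt B A")
    case True
    then show ?thesis
      using lead_mon_binomial[OF V(1,2) True, where 'k = 'k] by simp
  next
    case False
    then have "lex_less lt A B"
      using below by blast
    then have "lead_mon lt (Mon B - Mon A :: 'k mpoly) = B"
      by (rule lead_mon_binomial[OF V(2,1)])
    then show ?thesis
      using False lead_mon_uminus[of lt "Mon B - Mon A :: 'k mpoly"] by simp
  qed
  have below_lead: "lex_le lt x (lead_mon lt (Mon A - Mon B :: 'k mpoly))" if "x \<in> {A, B, D}" for x
    using that below lex_less_asym[OF V(1,2)] unfolding lead lex_le_def by auto
  have summand_below: "lex_le lt (lead_mon lt p) (lead_mon lt (Mon A - Mon B :: 'k mpoly))"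
    if "p \<noteq> 0" "Poly_Mapping.keys p \<subseteq> {A, B, D}" for p :: "'k mpoly"
  proof -
    have "\<forall>t\<in>Poly_Mapping.keys p. Poly_Mapping.keys t \<subseteq> V"
      using that(2) V by blast
    then have "lead_mon lt p \<in> {A, B, D}"
      using lead_mon_greatest(1)[OF that(1)] that(2) by blast
    then show ?thesis
      by (rule below_lead)
  qed
  show ?thesis
    unfolding reduces_to_zero_def
  proof (rule exI[of _ "[g1, g2]"], rule exI[of _ "[q1, q2]"], intro conjI allI impI)
    show "(Mon A - Mon B :: 'k mpoly) = sum_list (map2 (*) [q1, q2] [g1, g2])"
      using q1g1 q2g2 by simp
    show "lex_le lt (lead_mon lt ([q1, q2] ! i * [g1, g2] ! i)) (lead_mon lt (Mon A - Mon B :: 'k mpoly))"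
      if "i < length [g1, g2]" "[q1, q2] ! i * [g1, g2] ! i \<noteq> 0" for i
    proof -
      have "[q1, q2] ! i * [g1, g2] ! i \<in> {Mon A - Mon D, Mon D - Mon B}"
        using that(1) q1g1 q2g2 by (cases i) auto
      then have "Poly_Mapping.keys ([q1, q2] ! i * [g1, g2] ! i) \<subseteq> {A, B, D}"
        using keys_binomial_subset[of A D, where 'k = 'k] keys_binomial_subset[of D B, where 'k = 'k]
        by auto
      then show ?thesis
        using summand_below that(2) by blast
    qed
  qed (use assms in auto)
qed

end

section \<open>Inner intervals and their 2-minors\<close>

lemma inner_interval_corners:
  assumes "inner_interval P (x1, y1) (x2, y2)"
  shows "(x1, y1) \<in> vertex_set P" "(x2, y2) \<in> vertex_set P"
    "(x1, y2) \<in> vertex_set P" "(x2, y1) \<in> vertex_set P"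
proof -
  have cell: "cell_vertices v \<subseteq> vertex_set P" if "v \<in> P" for v
    using that unfolding vertex_set_def by blast
  have "(x1, y1) \<in> P" "(x2 - 1, y2 - 1) \<in> P" "(x1, y2 - 1) \<in> P" "(x2 - 1, y1) \<in> P"
    using assms unfolding inner_interval_def by auto
  from this[THEN cell] show "(x1, y1) \<in> vertex_set P" "(x2, y2) \<in> vertex_set P"
    "(x1, y2) \<in> vertex_set P" "(x2, y1) \<in> vertex_set P"
    unfolding cell_vertices_def by auto
qed

lemma inner_interval_subinterval:
  assumes "inner_interval P (x1, y1) (x2, y2)"
    and "x1 \<le> x1'" "x1' < x2'" "x2' \<le> x2" "y1 \<le> y1'" "y1' < y2'" "y2' \<le> y2"
  shows "inner_interval P (x1', y1') (x2', y2')"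
  using assms unfolding inner_interval_def by auto

lemma inner_interval_join_horizontal:
  assumes "inner_interval P (x1, y1) (x2, y2)" "inner_interval P (x2, y1) (x3, y2)"
  shows "inner_interval P (x1, y1) (x3, y2)"
  using assms unfolding inner_interval_def by (metis fst_conv not_le order_less_trans snd_conv)

lemma inner_interval_join_vertical:
  assumes "inner_interval P (x1, y1) (x2, y2)" "inner_interval P (x1, y2) (x2, y3)"
  shows "inner_interval P (x1, y1) (x2, y3)"
  using assms unfolding inner_interval_def by (metis fst_conv not_le order_less_trans snd_conv)

lemma minor_eq_binomial:
  "(minor a b :: 'k::comm_ring_1 mpoly) = Mon (X a + X b) - Mon (X (fst a, snd b) + X (fst b, snd a))"
  by (simp add: minor_def var_def mult_single)

lemma var_mult_minor:
  "(var u * minor a b :: 'k::comm_ring_1 mpoly)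
     = Mon (mon3 u a b) - Mon (mon3 u (fst a, snd b) (fst b, snd a))"
  by (simp add: minor_eq_binomial var_def mult_single right_diff_distrib mon3_def add.assoc)

lemma keys_var: "Poly_Mapping.keys (var u :: 'k::comm_ring_1 mpoly) = {X u}"
  by (simp add: var_def)

lemma keys_uminus_var: "Poly_Mapping.keys (- var u :: 'k::comm_ring_1 mpoly) = {X u}"
  by (simp add: var_def single_uminus[symmetric])

locale collection_order =
  fixes P :: "vertex set" and lt :: "vertex \<Rightarrow> vertex \<Rightarrow> bool"
  assumes P_order: "P_order P lt"

sublocale collection_order \<subseteq> vertex_order "vertex_set P" lt
  using P_order unfolding P_order_def by unfold_locales blast+

context collection_order
begin

lemma lead_mon_minor:
  assumes "inner_interval P (x1, y1) (x2, y2)"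
  shows "(lex_less lt (X (x1, y2) + X (x2, y1)) (X (x1, y1) + X (x2, y2))
          \<and> lead_mon lt (minor (x1, y1) (x2, y2) :: 'k::comm_ring_1 mpoly) = X (x1, y1) + X (x2, y2))
       \<or> (lex_less lt (X (x1, y1) + X (x2, y2)) (X (x1, y2) + X (x2, y1))
          \<and> lead_mon lt (minor (x1, y1) (x2, y2) :: 'k mpoly) = X (x1, y2) + X (x2, y1))"
proof -
  let ?D = "X (x1, y1) + X (x2, y2)" and ?N = "X (x1, y2) + X (x2, y1)"
  have minor: "(minor (x1, y1) (x2, y2) :: 'k mpoly) = Mon ?D - Mon ?N"
    by (simp add: minor_eq_binomial)
  have V: "Poly_Mapping.keys ?D \<subseteq> vertex_set P" "Poly_Mapping.keys ?N \<subseteq> vertex_set P"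
    using inner_interval_corners[OF assms] keys_X2_subset by blast+
  have "?D \<noteq> ?N"
    using assms unfolding inner_interval_def by (intro X2_neq) auto
  then consider "lex_less lt ?N ?D" | "lex_less lt ?D ?N"
    using lex_less_total[OF V] by blast
  then show ?thesis
  proof cases
    case 1
    then show ?thesis
      using lead_mon_binomial[OF V(1,2) 1, where 'k = 'k] minor by simp
  next
    case 2
    have "lead_mon lt (Mon ?N - Mon ?D :: 'k mpoly) = ?N"
      using lead_mon_binomial[OF V(2,1) 2] .
    then show ?thesis
      using 2 minor lead_mon_uminus[of lt "Mon ?N - Mon ?D :: 'k mpoly"] by simp
  qed
qed

lemma reduces_to_zero_inner_minors:
  fixes S :: "'k::field mpoly"
  assumes "reduces_to_zero lt (vertex_set P) (inner_minors P) S"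
    and "S \<noteq> 0" "\<forall>t\<in>Poly_Mapping.keys S. Poly_Mapping.keys t \<subseteq> vertex_set P"
  obtains x1 y1 x2 y2 t where "inner_interval P (x1, y1) (x2, y2)"
    "(lex_less lt (X (x1, y2) + X (x2, y1)) (X (x1, y1) + X (x2, y2))
        \<and> lead_mon lt S = t + (X (x1, y1) + X (x2, y2)))
     \<or> (lex_less lt (X (x1, y1) + X (x2, y2)) (X (x1, y2) + X (x2, y1))
        \<and> lead_mon lt S = t + (X (x1, y2) + X (x2, y1)))"
proof -
  have "\<exists>e1 e2. Poly_Mapping.keys e1 \<subseteq> vertex_set P \<and> Poly_Mapping.keys e2 \<subseteq> vertex_set P
      \<and> lex_less lt e2 e1 \<and> (g = Mon e1 - Mon e2 \<or> g = Mon e2 - Mon e1)"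
    if minor_g: "g \<in> inner_minors P" for g :: "'k mpoly"
  proof -
    obtain x1 y1 x2 y2 where g: "g = minor (x1, y1) (x2, y2)" "inner_interval P (x1, y1) (x2, y2)"
      using minor_g unfolding inner_minors_def by auto
    let ?D = "X (x1, y1) + X (x2, y2)" and ?N = "X (x1, y2) + X (x2, y1)"
    have "Poly_Mapping.keys ?D \<subseteq> vertex_set P" "Poly_Mapping.keys ?N \<subseteq> vertex_set P"
      using inner_interval_corners[OF g(2)] keys_X2_subset by blast+
    moreover have "g = Mon ?D - Mon ?N"
      using g(1) by (simp add: minor_eq_binomial)
    moreover have "lex_less lt ?N ?D \<or> lex_less lt ?D ?N"
      using lead_mon_minor[OF g(2), where 'k = 'k] by blast
    ultimately show ?thesis
      by blast
  qed
  then obtain g t where g: "g \<in> inner_minors P" and t: "lead_mon lt S = t + lead_mon lt (g :: 'k mpoly)"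
    using reduces_to_zero_lead_mon_dvd assms by blast
  from g obtain x1 y1 x2 y2 where "g = minor (x1, y1) (x2, y2)" "inner_interval P (x1, y1) (x2, y2)"
    unfolding inner_minors_def by auto
  then show ?thesis
    using that t lead_mon_minor[of x1 y1 x2 y2, where 'k = 'k] by metis
qed

end

section \<open>Two inner intervals sharing the upper right corner\<close>

locale shared_corner_intervals = collection_order +
  fixes i j k l m n :: int
  assumes ineq: "i < m" "m < k" "n < j" "j < l"
    and inner_ab: "inner_interval P (i, j) (k, l)"
    and inner_\<alpha>b: "inner_interval P (m, n) (k, l)"
begin

text \<open>In the notation of the paper, \<open>A = x\<^sub>a x\<^sub>\<gamma> x\<^sub>\<delta>\<close>, \<open>B = x\<^sub>\<alpha> x\<^sub>c x\<^sub>d\<close>,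
  \<open>D\<^sub>h = x\<^sub>\<delta> x\<^sub>c x\<^sub>h\<close> and \<open>D\<^sub>r = x\<^sub>d x\<^sub>r x\<^sub>\<gamma>\<close>.\<close>
abbreviation A where "A \<equiv> mon3 (i, j) (m, l) (k, n)"
abbreviation B where "B \<equiv> mon3 (m, n) (i, l) (k, j)"
abbreviation Dh where "Dh \<equiv> mon3 (k, n) (i, l) (m, j)"
abbreviation Dr where "Dr \<equiv> mon3 (k, j) (i, n) (m, l)"

lemma inner_a\<gamma>: "inner_interval P (i, j) (m, l)"
  using inner_interval_subinterval[OF inner_ab] ineq by auto

lemma inner_\<alpha>d: "inner_interval P (m, n) (k, j)"
  using inner_interval_subinterval[OF inner_\<alpha>b] ineq by auto

lemma inner_r\<gamma>_rd_if_inner_rh: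
  assumes "inner_interval P (i, n) (m, j)"
  shows "inner_interval P (i, n) (m, l)" "inner_interval P (i, n) (k, j)"
  using inner_interval_join_vertical[OF assms inner_a\<gamma>]
    inner_interval_join_horizontal[OF assms inner_\<alpha>d] .

lemma config_vertices:
  "(i, j) \<in> vertex_set P" "(k, l) \<in> vertex_set P" "(i, l) \<in> vertex_set P" "(k, j) \<in> vertex_set P"
  "(m, n) \<in> vertex_set P" "(m, l) \<in> vertex_set P" "(k, n) \<in> vertex_set P" "(m, j) \<in> vertex_set P"
  using inner_interval_corners[OF inner_ab] inner_interval_corners[OF inner_\<alpha>b]
    inner_interval_corners[OF inner_a\<gamma>] by auto

lemma keys_config_monomials:
  "Poly_Mapping.keys A \<subseteq> vertex_set P" "Poly_Mapping.keys B \<subseteq> vertex_set P"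
  "Poly_Mapping.keys Dh \<subseteq> vertex_set P"
  using keys_mon3_subset config_vertices by blast+

lemma A_neq_B: "A \<noteq> B"
  using ineq by (intro mon3_neq) auto

lemma binomial_AB_nonzero_supported:
  "(Mon A - Mon B :: 'k::comm_ring_1 mpoly) \<noteq> 0"
  "\<forall>t\<in>Poly_Mapping.keys (Mon A - Mon B :: 'k::comm_ring_1 mpoly). Poly_Mapping.keys t \<subseteq> vertex_set P"
  using keys_binomial[OF A_neq_B, where 'k = 'k] keys_config_monomials by auto

lemma diagonal_leads_if_not_coprime:
  assumes "Poly_Mapping.keys (lead_mon lt (minor (i, j) (k, l) :: 'k::comm_ring_1 mpoly))
      \<inter> Poly_Mapping.keys (lead_mon lt (minor (m, n) (k, l) :: 'k mpoly)) \<noteq> {}"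
  shows "lex_less lt (X (i, l) + X (k, j)) (X (i, j) + X (k, l))"
    and "lex_less lt (X (m, l) + X (k, n)) (X (m, n) + X (k, l))"
  using assms lead_mon_minor[OF inner_ab, where 'k = 'k] lead_mon_minor[OF inner_\<alpha>b, where 'k = 'k]
    keys_X2[of "(i, j)" "(k, l)"] keys_X2[of "(i, l)" "(k, j)"]
    keys_X2[of "(m, n)" "(k, l)"] keys_X2[of "(m, l)" "(k, n)"] ineq
  by auto

lemma spoly_eq_binomial_AB:
  assumes "lex_less lt (X (i, l) + X (k, j)) (X (i, j) + X (k, l))"
    and "lex_less lt (X (m, l) + X (k, n)) (X (m, n) + X (k, l))"
  shows "spoly lt (minor (i, j) (k, l) :: 'k::field mpoly) (minor (m, n) (k, l)) = Mon A - Mon B"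
proof -
  have V: "Poly_Mapping.keys (X u + X v) \<subseteq> vertex_set P"
    if "u \<in> vertex_set P" "v \<in> vertex_set P" for u v
    using that keys_X2_subset by blast
  have lead1: "lead_mon lt (minor (i, j) (k, l) :: 'k mpoly) = X (i, j) + X (k, l)"
    using lead_mon_binomial[OF V V assms(1)] config_vertices by (simp add: minor_eq_binomial)
  have lead2: "lead_mon lt (minor (m, n) (k, l) :: 'k mpoly) = X (m, n) + X (k, l)"
    using lead_mon_binomial[OF V V assms(2)] config_vertices by (simp add: minor_eq_binomial)
  have coef1: "lead_coef lt (minor (i, j) (k, l) :: 'k mpoly) = 1"
    using X2_neq[of "(i, l)" "(i, j)" "(k, l)" "(k, j)"] ineq
    unfolding lead_coef_def lead1 by (simp add: minor_eq_binomial lookup_minus lookup_single when_def)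
  have coef2: "lead_coef lt (minor (m, n) (k, l) :: 'k mpoly) = 1"
    using X2_neq[of "(m, l)" "(m, n)" "(k, l)" "(k, n)"] ineq
    unfolding lead_coef_def lead2 by (simp add: minor_eq_binomial lookup_minus lookup_single when_def)
  have diff: "(X (m, n) + X (k, l)) - (X (i, j) + X (k, l)) = X (m, n)"
    by (rule poly_mapping_eqI) (use ineq in \<open>auto simp: lookup_minus lookup_add lookup_single when_def\<close>)
  have lcm: "mon_lcm (X (i, j) + X (k, l)) (X (m, n) + X (k, l)) = X (m, n) + (X (i, j) + X (k, l))"
    unfolding mon_lcm_def diff by (simp only: ac_simps)
  have "spoly lt (minor (i, j) (k, l) :: 'k mpoly) (minor (m, n) (k, l))
      = Mon (X (m, n)) * minor (i, j) (k, l) - Mon (X (i, j)) * minor (m, n) (k, l)"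
    unfolding spoly_def Let_def lead1 lead2 coef1 coef2 lcm by (simp add: ac_simps)
  also have "\<dots> = Mon A - Mon B"
    by (simp add: minor_eq_binomial mult_single right_diff_distrib mon3_def ac_simps)
  finally show ?thesis .
qed

lemma reduces_to_zero_via_h:
  assumes "(lex_less lt B A \<and> lex_less lt Dh A) \<or> (lex_less lt A B \<and> lex_less lt Dh B)"
  shows "reduces_to_zero lt (vertex_set P) (inner_minors P) (Mon A - Mon B :: 'k::field mpoly)"
proof (rule binomial_reduces_to_zero_via)
  show "minor (i, j) (m, l) \<in> (inner_minors P :: 'k mpoly set)"
    "minor (m, n) (k, j) \<in> (inner_minors P :: 'k mpoly set)"
    using inner_a\<gamma> inner_\<alpha>d unfolding inner_minors_def by blast+
  show "var (k, n) * minor (i, j) (m, l) = (Mon A - Mon Dh :: 'k mpoly)"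
    unfolding var_mult_minor by (simp add: mon3_def ac_simps)
  show "- var (i, l) * minor (m, n) (k, j) = (Mon Dh - Mon B :: 'k mpoly)"
    using var_mult_minor[of "(i, l)" "(m, n)" "(k, j)", where 'k = 'k]
    by (simp add: mon3_def ac_simps)
qed (use assms config_vertices keys_config_monomials in \<open>simp_all add: keys_var keys_uminus_var\<close>)

lemma reduces_to_zero_via_r:
  assumes rh: "inner_interval P (i, n) (m, j)"
    and "(lex_less lt B A \<and> lex_less lt Dr A) \<or> (lex_less lt A B \<and> lex_less lt Dr B)"
  shows "reduces_to_zero lt (vertex_set P) (inner_minors P) (Mon A - Mon B :: 'k::field mpoly)"
proof (rule binomial_reduces_to_zero_via)
  show "minor (i, n) (k, j) \<in> (inner_minors P :: 'k mpoly set)"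
    "minor (i, n) (m, l) \<in> (inner_minors P :: 'k mpoly set)"
    using inner_r\<gamma>_rd_if_inner_rh[OF rh] unfolding inner_minors_def by blast+
  show "- var (m, l) * minor (i, n) (k, j) = (Mon A - Mon Dr :: 'k mpoly)"
    using var_mult_minor[of "(m, l)" "(i, n)" "(k, j)", where 'k = 'k]
    by (simp add: mon3_def ac_simps)
  show "var (k, j) * minor (i, n) (m, l) = (Mon Dr - Mon B :: 'k mpoly)"
    unfolding var_mult_minor by (simp add: mon3_def ac_simps)
  have "(i, n) \<in> vertex_set P"
    using inner_interval_corners(1)[OF rh] .
  then show "Poly_Mapping.keys Dr \<subseteq> vertex_set P"
    using keys_mon3_subset config_vertices by blast
qed (use assms config_vertices keys_config_monomials in \<open>simp_all add: keys_var keys_uminus_var\<close>)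

lemma reduces_to_zero_imp_when_A_leads:
  assumes red: "reduces_to_zero lt (vertex_set P) (inner_minors P) (Mon A - Mon B :: 'k::field mpoly)"
    and BA: "lex_less lt B A"
    and lead_\<alpha>b: "lex_less lt (X (m, l) + X (k, n)) (X (m, n) + X (k, l))"
  shows "((lt (m, j) (i, j) \<and> lt (i, l) (i, j)) \<or> (lt (m, j) (m, l) \<and> lt (i, l) (m, l))) \<or>
    (inner_interval P (i, n) (m, j) \<and>
      ((lt (i, n) (i, j) \<and> lt (k, j) (i, j)) \<or> (lt (i, n) (k, n) \<and> lt (k, j) (k, n))))"
proof -
  have lead: "lead_mon lt (Mon A - Mon B :: 'k mpoly) = A"
    using lead_mon_binomial[OF keys_config_monomials(1,2) BA] .
  obtain x1 y1 x2 y2 t where R: "inner_interval P (x1, y1) (x2, y2)"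
    and cases: "(lex_less lt (X (x1, y2) + X (x2, y1)) (X (x1, y1) + X (x2, y2))
        \<and> A = t + (X (x1, y1) + X (x2, y2)))
     \<or> (lex_less lt (X (x1, y1) + X (x2, y2)) (X (x1, y2) + X (x2, y1))
        \<and> A = t + (X (x1, y2) + X (x2, y1)))"
    using reduces_to_zero_inner_minors[OF red binomial_AB_nonzero_supported] unfolding lead by blast
  have xy: "x1 < x2" "y1 < y2"
    using R unfolding inner_interval_def by auto
  from cases show ?thesis
  proof (elim disjE conjE)
    assume less: "lex_less lt (X (x1, y2) + X (x2, y1)) (X (x1, y1) + X (x2, y2))"
      and dvd: "A = t + (X (x1, y1) + X (x2, y2))"
    have "x1 = i \<and> y1 = j \<and> x2 = m \<and> y2 = l"
      using mon3_eq_add_X2_mem[OF dvd] xy ineq by auto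
    then have "lex_less lt (X (m, j) + X (i, l)) (X (i, j) + X (m, l))"
      using less by (simp add: add.commute)
    then show ?thesis
      using lex_less_X2_iff config_vertices ineq by auto
  next
    assume less: "lex_less lt (X (x1, y1) + X (x2, y2)) (X (x1, y2) + X (x2, y1))"
      and dvd: "A = t + (X (x1, y2) + X (x2, y1))"
    have "(x1 = i \<and> y1 = n \<and> x2 = k \<and> y2 = j) \<or> (x1 = m \<and> y1 = n \<and> x2 = k \<and> y2 = l)"
      using mon3_eq_add_X2_mem[OF dvd] xy ineq by auto
    then show ?thesis
    proof (elim disjE)
      assume "x1 = i \<and> y1 = n \<and> x2 = k \<and> y2 = j"
      then have rh: "inner_interval P (i, n) (m, j)"
        and "lex_less lt (X (i, n) + X (k, j)) (X (i, j) + X (k, n))"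
        using inner_interval_subinterval[OF R] less ineq by auto
      then show ?thesis
        using lex_less_X2_iff inner_interval_corners(1)[OF rh] config_vertices ineq by auto
    next
      assume "x1 = m \<and> y1 = n \<and> x2 = k \<and> y2 = l"
      then show ?thesis
        using less lead_\<alpha>b lex_less_asym keys_X2_subset config_vertices by blast
    qed
  qed
qed

lemma reduces_to_zero_imp_when_B_leads:
  assumes red: "reduces_to_zero lt (vertex_set P) (inner_minors P) (Mon A - Mon B :: 'k::field mpoly)"
    and AB: "lex_less lt A B"
    and lead_ab: "lex_less lt (X (i, l) + X (k, j)) (X (i, j) + X (k, l))"
  shows "((lt (m, j) (m, n) \<and> lt (k, n) (m, n)) \<or> (lt (m, j) (k, j) \<and> lt (k, n) (k, j))) \<or>
    (inner_interval P (i, n) (m, j) \<and>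
      ((lt (i, n) (m, n) \<and> lt (m, l) (m, n)) \<or> (lt (i, n) (i, l) \<and> lt (m, l) (i, l))))"
proof -
  have "lead_mon lt (Mon B - Mon A :: 'k mpoly) = B"
    using lead_mon_binomial[OF keys_config_monomials(2,1) AB] .
  then have lead: "lead_mon lt (Mon A - Mon B :: 'k mpoly) = B"
    using lead_mon_uminus[of lt "Mon B - Mon A :: 'k mpoly"] by simp
  obtain x1 y1 x2 y2 t where R: "inner_interval P (x1, y1) (x2, y2)"
    and cases: "(lex_less lt (X (x1, y2) + X (x2, y1)) (X (x1, y1) + X (x2, y2))
        \<and> B = t + (X (x1, y1) + X (x2, y2)))
     \<or> (lex_less lt (X (x1, y1) + X (x2, y2)) (X (x1, y2) + X (x2, y1))
        \<and> B = t + (X (x1, y2) + X (x2, y1)))"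
    using reduces_to_zero_inner_minors[OF red binomial_AB_nonzero_supported] unfolding lead by blast
  have xy: "x1 < x2" "y1 < y2"
    using R unfolding inner_interval_def by auto
  from cases show ?thesis
  proof (elim disjE conjE)
    assume less: "lex_less lt (X (x1, y2) + X (x2, y1)) (X (x1, y1) + X (x2, y2))"
      and dvd: "B = t + (X (x1, y1) + X (x2, y2))"
    have "x1 = m \<and> y1 = n \<and> x2 = k \<and> y2 = j"
      using mon3_eq_add_X2_mem[OF dvd] xy ineq by auto
    then show ?thesis
      using less lex_less_X2_iff config_vertices ineq by auto
  next
    assume less: "lex_less lt (X (x1, y1) + X (x2, y2)) (X (x1, y2) + X (x2, y1))"
      and dvd: "B = t + (X (x1, y2) + X (x2, y1))"
    have "(x1 = i \<and> y1 = n \<and> x2 = m \<and> y2 = l) \<or> (x1 = i \<and> y1 = j \<and> x2 = k \<and> y2 = l)"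
      using mon3_eq_add_X2_mem[OF dvd] xy ineq by auto
    then show ?thesis
    proof (elim disjE)
      assume "x1 = i \<and> y1 = n \<and> x2 = m \<and> y2 = l"
      then have rh: "inner_interval P (i, n) (m, j)"
        and "lex_less lt (X (i, n) + X (m, l)) (X (m, n) + X (i, l))"
        using inner_interval_subinterval[OF R] less ineq by (auto simp: add.commute)
      then show ?thesis
        using lex_less_X2_iff inner_interval_corners(1)[OF rh] config_vertices ineq by auto
    next
      assume "x1 = i \<and> y1 = j \<and> x2 = k \<and> y2 = l"
      then show ?thesis
        using less lead_ab lex_less_asym keys_X2_subset config_vertices by blast
    qed
  qed
qed

lemma reduces_to_zero_iff:
  assumes lead_ab: "lex_less lt (X (i, l) + X (k, j)) (X (i, j) + X (k, l))"
    and lead_\<alpha>b: "lex_less lt (X (m, l) + X (k, n)) (X (m, n) + X (k, l))"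
  shows "reduces_to_zero lt (vertex_set P) (inner_minors P) (Mon A - Mon B :: 'k::field mpoly) \<longleftrightarrow>
    (lex_less lt A B \<and>
      ((lt (m, j) (m, n) \<and> lt (k, n) (m, n)) \<or> (lt (m, j) (k, j) \<and> lt (k, n) (k, j)))) \<or>
    (lex_less lt A B \<and> inner_interval P (i, n) (m, j) \<and>
      ((lt (i, n) (m, n) \<and> lt (m, l) (m, n)) \<or> (lt (i, n) (i, l) \<and> lt (m, l) (i, l)))) \<or>
    (lex_less lt B A \<and>
      ((lt (m, j) (i, j) \<and> lt (i, l) (i, j)) \<or> (lt (m, j) (m, l) \<and> lt (i, l) (m, l)))) \<or>
    (lex_less lt B A \<and> inner_interval P (i, n) (m, j) \<and>
      ((lt (i, n) (i, j) \<and> lt (k, j) (i, j)) \<or> (lt (i, n) (k, n) \<and> lt (k, j) (k, n))))"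
    (is "?red \<longleftrightarrow> ?h_B \<or> ?r_B \<or> ?h_A \<or> ?r_A")
proof -
  note V = config_vertices
  have Dh_A: "lex_less lt Dh A \<longleftrightarrow>
      (lt (m, j) (i, j) \<and> lt (i, l) (i, j)) \<or> (lt (m, j) (m, l) \<and> lt (i, l) (m, l))"
    using lex_less_mon3_iff[of "(i, j)" "(m, l)" "(m, j)" "(i, l)" "(k, n)"] V ineq
    by (simp add: mon3_def ac_simps)
  have Dh_B: "lex_less lt Dh B \<longleftrightarrow>
      (lt (m, j) (m, n) \<and> lt (k, n) (m, n)) \<or> (lt (m, j) (k, j) \<and> lt (k, n) (k, j))"
    using lex_less_mon3_iff[of "(m, n)" "(k, j)" "(m, j)" "(k, n)" "(i, l)"] V ineq
    by (simp add: mon3_def ac_simps)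
  have Dr_A: "lex_less lt Dr A \<longleftrightarrow>
      (lt (i, n) (i, j) \<and> lt (k, j) (i, j)) \<or> (lt (i, n) (k, n) \<and> lt (k, j) (k, n))"
    if "(i, n) \<in> vertex_set P"
    using lex_less_mon3_iff[of "(i, j)" "(k, n)" "(i, n)" "(k, j)" "(m, l)"] that V ineq
    by (simp add: mon3_def ac_simps)
  have Dr_B: "lex_less lt Dr B \<longleftrightarrow>
      (lt (i, n) (m, n) \<and> lt (m, l) (m, n)) \<or> (lt (i, n) (i, l) \<and> lt (m, l) (i, l))"
    if "(i, n) \<in> vertex_set P"
    using lex_less_mon3_iff[of "(m, n)" "(i, l)" "(i, n)" "(m, l)" "(k, j)"] that V ineq
    by (simp add: mon3_def ac_simps)
  consider (A_leads) "lex_less lt B A" | (B_leads) "lex_less lt A B"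
    using lex_less_total[OF keys_config_monomials(1,2) A_neq_B] by blast
  then show ?thesis
  proof cases
    case A_leads
    then have "\<not> lex_less lt A B"
      using lex_less_asym keys_config_monomials by blast
    moreover have "?red \<longleftrightarrow> ?h_A \<or> ?r_A"
      using reduces_to_zero_imp_when_A_leads[OF _ A_leads lead_\<alpha>b] A_leads
        reduces_to_zero_via_h[where 'k = 'k] reduces_to_zero_via_r[where 'k = 'k]
        Dh_A Dr_A inner_interval_corners(1)
      by blast
    ultimately show ?thesis
      by blast
  next
    case B_leads
    then have "\<not> lex_less lt B A"
      using lex_less_asym keys_config_monomials by blast
    moreover have "?red \<longleftrightarrow> ?h_B \<or> ?r_B"
      using reduces_to_zero_imp_when_B_leads[OF _ B_leads lead_ab] B_leads
        reduces_to_zero_via_h[where 'k = 'k] reduces_to_zero_via_r[where 'k = 'k]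
        Dh_B Dr_B inner_interval_corners(1)
      by blast
    ultimately show ?thesis
      by blast
  qed
qed

end

theorem mainTheorem2:
  fixes P :: "vertex set" and lt :: "vertex \<Rightarrow> vertex \<Rightarrow> bool"
    and i j k l m n :: int
  assumes cells: "is_collection_of_cells P"
    and ineq: "i < m" "m < k" "n < j" "j < l"
    and inner1: "inner_interval P (i, j) (k, l)"
    and inner2: "inner_interval P (m, n) (k, l)"
    and porder: "P_order P lt"
    and notcoprime: "Poly_Mapping.keys (lead_mon lt (minor (i, j) (k, l) :: 'k::field mpoly))
                     \<inter> Poly_Mapping.keys (lead_mon lt (minor (m, n) (k, l) :: 'k mpoly)) \<noteq> {}"
  shows "reduces_to_zero lt (vertex_set P) (inner_minors P)
           (spoly lt (minor (i, j) (k, l) :: 'k mpoly) (minor (m, n) (k, l)))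
         \<longleftrightarrow>
         (let a = (i, j); b = (k, l); \<alpha> = (m, n); c = (i, l); d = (k, j);
              \<gamma> = (m, l); \<delta> = (k, n); h = (m, j); r = (i, n) in
          (lex_less lt (mon3 a \<gamma> \<delta>) (mon3 \<alpha> c d) \<and>
             ((lt h \<alpha> \<and> lt \<delta> \<alpha>) \<or> (lt h d \<and> lt \<delta> d))) \<or>
          (lex_less lt (mon3 a \<gamma> \<delta>) (mon3 \<alpha> c d) \<and> inner_interval P r h \<and>
             ((lt r \<alpha> \<and> lt \<gamma> \<alpha>) \<or> (lt r c \<and> lt \<gamma> c))) \<or>
          (lex_less lt (mon3 \<alpha> c d) (mon3 a \<gamma> \<delta>) \<and>
             ((lt h a \<and> lt c a) \<or> (lt h \<gamma> \<and> lt c \<gamma>))) \<or>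
          (lex_less lt (mon3 \<alpha> c d) (mon3 a \<gamma> \<delta>) \<and> inner_interval P r h \<and>
             ((lt r a \<and> lt d a) \<or> (lt r \<delta> \<and> lt d \<delta>))))"
proof -
  interpret shared_corner_intervals P lt i j k l m n
    using porder ineq inner1 inner2 by unfold_locales
  note diagonal_leads = diagonal_leads_if_not_coprime[OF notcoprime]
  show ?thesis
    unfolding Let_def spoly_eq_binomial_AB[OF diagonal_leads]
    by (rule reduces_to_zero_iff[OF diagonal_leads])
qed

end
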